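(* Let $A,B\in\mathscr{B}(\Omega)$ with $\underline{P}(B)>0$ and $\underline{P}(B^c)>0$, and let $\mathcal{B}=\{B,B^c\}$. If $\mathcal{B}$ dilates $A$ under either Dempster's rule or the Geometric rule, then there exists a probability measure $P^*\ge\underline{P}$ such that $P^*(A\cap B)=P^*(A)P^*(B)$.
   Context: $\Omega$ is a separable, completely metrizable space with Borel $\sigma$-algebra $\mathscr{B}(\Omega)$; $\underline{P}$ is a Choquet capacity of order 2 on $\mathscr{B}(\Omega)$ (a coherent lower probability with weakly compact set of dominating measures satisfying $\underline{P}(A\cup B)\ge\underline{P}(A)+\underline{P}(B)-\underline{P}(A\cap B)$); $\Pi=\{P:P\ge\underline{P}\}$, $\underline{P}(A)=\inf_{P\in\Pi}P(A)$, $\overline{P}(A)=\sup_{P\in\Pi}P(A)=1-\underline{P}(A^c)$. Dempster's rule: $\overline{P}_{\mathfrak{D}}(A\mid Z)=\overline{P}(A\cap Z)/\overline{P}(Z)$, $\underline{P}_{\mathfrak{D}}(A\mid Z)=1-\overline{P}_{\mathfrak{D}}(A^c\mid Z)$. Geometric rule: $\underline{P}_{\mathfrak{G}}(A\mid Z)=\underline{P}(A\cap Z)/\underline{P}(Z)$, $\overline{P}_{\mathfrak{G}}(A\mid Z)=1-\underline{P}_{\mathfrak{G}}(A^c\mid Z)$. For a rule with conditional lower/upper probabilities $\underline{P}_\bullet,\overline{P}_\bullet$, $\mathcal{B}$ dilates $A$ if $\sup_{Z\in\mathcal{B}}\underline{P}_\bullet(A\mid Z)\le\underline{P}(A)\le\overline{P}(A)\le\inf_{Z\in\mathcal{B}}\overline{P}_\bullet(A\mid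 Z)$ with at least one of the two outer inequalities strict. *)

theory Defs
  imports "HOL-Probability.Probability"
begin

text \<open>Omega is a type of class polish_space (separable, complete metric space);
  events are the Borel sets, i.e. sets borel.  A lower probability is a
  function Pl on sets.\<close>

definition upper_prob :: "('a set \<Rightarrow> real) \<Rightarrow> 'a set \<Rightarrow> real" where
  "upper_prob Pl A = 1 - Pl (- A)"

definition core :: "('a::topological_space set \<Rightarrow> real) \<Rightarrow> 'a measure set" where
  "core Pl = {M. prob_space M \<and> sets M = sets borel \<and>
                 (\<forall>A \<in> sets borel. Pl A \<le> measure M A)}"

definition weak_conv_seq :: "(nat \<Rightarrow> 'a::topological_space measure) \<Rightarrow> 'a measure \<Rightarrow> bool" where
  "weak_conv_seq Ms M \<longleftrightarrow>
     (\<forall>f :: 'a \<Rightarrow> real. continuous_on UNIV f \<and> bounded (range f) \<longrightarrow>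
        (\<lambda>n. integral\<^sup>L (Ms n) f) \<longlonglongrightarrow> integral\<^sup>L M f)"

text \<open>Weak (sequential) compactness of a set of Borel probability measures;
  on a Polish space the weak topology is metrizable, so this is weak compactness.\<close>
definition weakly_seq_compact :: "'a::topological_space measure set \<Rightarrow> bool" where
  "weakly_seq_compact S \<longleftrightarrow>
     (\<forall>Ms. (\<forall>n. Ms n \<in> S) \<longrightarrow>
        (\<exists>(r::nat \<Rightarrow> nat) M. strict_mono r \<and> M \<in> S \<and> weak_conv_seq (Ms \<circ> r) M))"

definition choquet_capacity_2 :: "('a::topological_space set \<Rightarrow> real) \<Rightarrow> bool" where
  "choquet_capacity_2 Pl \<longleftrightarrow>
     core Pl \<noteq> {} \<and>
     (\<forall>A \<in> sets borel. Pl A = (INF M \<in> core Pl. measure M A)) \<and>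
     weakly_seq_compact (core Pl) \<and>
     (\<forall>A \<in> sets borel. \<forall>B \<in> sets borel. Pl (A \<union> B) \<ge> Pl A + Pl B - Pl (A \<inter> B))"

definition dempster_upper :: "('a set \<Rightarrow> real) \<Rightarrow> 'a set \<Rightarrow> 'a set \<Rightarrow> real" where
  "dempster_upper Pl A Z = upper_prob Pl (A \<inter> Z) / upper_prob Pl Z"

definition dempster_lower :: "('a set \<Rightarrow> real) \<Rightarrow> 'a set \<Rightarrow> 'a set \<Rightarrow> real" where
  "dempster_lower Pl A Z = 1 - dempster_upper Pl (- A) Z"

definition geometric_lower :: "('a set \<Rightarrow> real) \<Rightarrow> 'a set \<Rightarrow> 'a set \<Rightarrow> real" where
  "geometric_lower Pl A Z = Pl (A \<inter> Z) / Pl Z"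

definition geometric_upper :: "('a set \<Rightarrow> real) \<Rightarrow> 'a set \<Rightarrow> 'a set \<Rightarrow> real" where
  "geometric_upper Pl A Z = 1 - geometric_lower Pl (- A) Z"

definition dilates ::
  "('a set \<Rightarrow> real) \<Rightarrow> ('a set \<Rightarrow> 'a set \<Rightarrow> real) \<Rightarrow> ('a set \<Rightarrow> 'a set \<Rightarrow> real)
     \<Rightarrow> 'a set set \<Rightarrow> 'a set \<Rightarrow> bool" where
  "dilates Pl condL condU BB A \<longleftrightarrow>
     (SUP Z \<in> BB. condL A Z) \<le> Pl A \<and> Pl A \<le> upper_prob Pl A \<and>
     upper_prob Pl A \<le> (INF Z \<in> BB. condU A Z) \<and>
     ((SUP Z \<in> BB. condL A Z) < Pl A \<or> upper_prob Pl A < (INF Z \<in> BB. condU A Z))"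

end

theory Submission
  imports Defs
begin

text \<open>The core is convex, and along a segment of it the covariance
  P(A \<inter> B) - P(A) P(B) varies continuously, so it vanishes somewhere once it takes
  both signs on the core.  Dilation supplies both signs: for X = A or X = -A and for
  both Y = B and Y = -B, Dempster dilation gives upper(X) upper(Y) < upper(X \<inter> Y),
  and Geometric dilation gives lower(X \<inter> Y) < lower(X) lower(Y).  As the lower
  probability is the infimum over the core, some member of the core then has a
  covariance of X with Y of the corresponding sign, and the covariance of X with -B
  is minus the covariance of X with B.\<close>

definition mix_measure :: "real \<Rightarrow> 'a measure \<Rightarrow> 'a measure \<Rightarrow> 'a measure" where
  "mix_measure t M N =
     measure_of (space M) (sets M) (\<lambda>X. ennreal t * emeasure M X + ennreal (1 - t) * emeasure N X)"

lemma space_mix_measure [simp]: "space (mix_measure t M N) = space M"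
  unfolding mix_measure_def by simp

lemma sets_mix_measure [simp]: "sets (mix_measure t M N) = sets M"
  unfolding mix_measure_def by (simp add: sets.sigma_sets_eq)

lemma emeasure_mix_measure:
  assumes "sets N = sets M" "X \<in> sets M"
  shows "emeasure (mix_measure t M N) X = ennreal t * emeasure M X + ennreal (1 - t) * emeasure N X"
  unfolding mix_measure_def
proof (rule emeasure_measure_of_sigma[OF sets.sigma_algebra_axioms _ _ assms(2)])
  show "positive (sets M) (\<lambda>X. ennreal t * emeasure M X + ennreal (1 - t) * emeasure N X)"
    by (simp add: positive_def)
  show "countably_additive (sets M) (\<lambda>X. ennreal t * emeasure M X + ennreal (1 - t) * emeasure N X)"
  proof (rule countably_additiveI)
    fix F :: "nat \<Rightarrow> 'a set"
    assume F: "range F \<subseteq> sets M" "disjoint_family F"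
    have "(\<Sum>i. ennreal t * emeasure M (F i) + ennreal (1 - t) * emeasure N (F i))
        = ennreal t * (\<Sum>i. emeasure M (F i)) + ennreal (1 - t) * (\<Sum>i. emeasure N (F i))"
      by (simp add: suminf_add[symmetric] ennreal_suminf_cmult)
    also have "\<dots> = ennreal t * emeasure M (\<Union>i. F i) + ennreal (1 - t) * emeasure N (\<Union>i. F i)"
      using F assms(1) by (simp add: suminf_emeasure)
    finally show "(\<Sum>i. ennreal t * emeasure M (F i) + ennreal (1 - t) * emeasure N (F i))
        = ennreal t * emeasure M (\<Union>i. F i) + ennreal (1 - t) * emeasure N (\<Union>i. F i)" .
  qed
qed

lemma measure_mix_measure:
  assumes "prob_space M" "prob_space N" "sets N = sets M" "X \<in> sets M" "0 \<le> t" "t \<le> 1"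
  shows "measure (mix_measure t M N) X = t * measure M X + (1 - t) * measure N X"
proof -
  interpret M: prob_space M by fact
  interpret N: prob_space N by fact
  have "emeasure (mix_measure t M N) X = ennreal (t * measure M X + (1 - t) * measure N X)"
    using assms(3-6)
    by (simp add: emeasure_mix_measure M.emeasure_eq_measure N.emeasure_eq_measure
        ennreal_mult ennreal_plus[symmetric])
  moreover have "0 \<le> t * measure M X + (1 - t) * measure N X"
    using assms(5,6) by simp
  ultimately show ?thesis
    unfolding measure_def[of "mix_measure t M N"] by simp
qed

lemma prob_space_mix_measure:
  assumes "prob_space M" "prob_space N" "sets N = sets M" "0 \<le> t" "t \<le> 1"
  shows "prob_space (mix_measure t M N)"
proof
  interpret M: prob_space M by fact
  interpret N: prob_space N by fact
  have "space N = space M"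
    using assms(3) by (rule sets_eq_imp_space_eq)
  then show "emeasure (mix_measure t M N) (space (mix_measure t M N)) = 1"
    using assms(3-5) M.emeasure_space_1 N.emeasure_space_1
    by (simp add: emeasure_mix_measure ennreal_plus[symmetric])
qed

lemma core_memD:
  assumes "P \<in> core Pl"
  shows "prob_space P" "sets P = sets borel" "space P = UNIV"
    "X \<in> sets borel \<Longrightarrow> Pl X \<le> measure P X"
  using assms sets_eq_imp_space_eq[of P borel] unfolding core_def by auto

lemma mix_measure_in_core:
  assumes "P \<in> core Pl" "Q \<in> core Pl" "0 \<le> t" "t \<le> 1"
  shows "mix_measure t P Q \<in> core Pl"
proof -
  have measure_mix: "measure (mix_measure t P Q) X = t * measure P X + (1 - t) * measure Q X"
    if "X \<in> sets borel" for X
    using assms that by (simp add: measure_mix_measure core_memD)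
  have "Pl X \<le> measure (mix_measure t P Q) X" if "X \<in> sets borel" for X
  proof -
    have "t * Pl X + (1 - t) * Pl X \<le> t * measure P X + (1 - t) * measure Q X"
      using core_memD(4)[OF assms(1) that] core_memD(4)[OF assms(2) that] assms(3,4)
      by (intro add_mono mult_left_mono) auto
    then show ?thesis
      using measure_mix[OF that] by (simp add: algebra_simps)
  qed
  then show ?thesis
    unfolding core_def using assms by (simp add: prob_space_mix_measure core_memD)
qed

lemma measure_core_Compl:
  assumes "P \<in> core Pl" "X \<in> sets borel"
  shows "measure P (- X) = 1 - measure P X"
proof -
  interpret prob_space P
    using assms(1) by (rule core_memD)
  show ?thesis
    using prob_compl[of X] assms core_memD(2,3)[OF assms(1)] by (simp add: Compl_eq_Diff_UNIV)
qed

lemma measure_core_Int_Compl: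
  assumes "P \<in> core Pl" "X \<in> sets borel" "Y \<in> sets borel"
  shows "measure P (X \<inter> - Y) = measure P X - measure P (X \<inter> Y)"
proof -
  interpret prob_space P
    using assms(1) by (rule core_memD)
  have "X \<inter> - Y = X - (X \<inter> Y)"
    by auto
  then show ?thesis
    using finite_measure_Diff[of X "X \<inter> Y"] assms core_memD(2)[OF assms(1)] by auto
qed

lemma measure_core_le_upper_prob:
  assumes "P \<in> core Pl" "X \<in> sets borel"
  shows "measure P X \<le> upper_prob Pl X"
  using core_memD(4)[OF assms(1), of "- X"] assms measure_core_Compl[OF assms]
  unfolding upper_prob_def by auto

definition event_cov :: "'a measure \<Rightarrow> 'a set \<Rightarrow> 'a set \<Rightarrow> real" where
  "event_cov P X Y = measure P (X \<inter> Y) - measure P X * measure P Y"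

lemma event_cov_Compl_right:
  assumes "P \<in> core Pl" "X \<in> sets borel" "Y \<in> sets borel"
  shows "event_cov P X (- Y) = - event_cov P X Y"
  unfolding event_cov_def measure_core_Int_Compl[OF assms] measure_core_Compl[OF assms(1,3)]
  by (simp add: algebra_simps)

lemma event_cov_Compl_left:
  assumes "P \<in> core Pl" "X \<in> sets borel" "Y \<in> sets borel"
  shows "event_cov P (- X) Y = - event_cov P X Y"
  using event_cov_Compl_right[OF assms(1,3,2)] unfolding event_cov_def
  by (simp add: Int_commute mult.commute)

lemma core_event_cov_zero_between:
  assumes "P \<in> core Pl" "Q \<in> core Pl" "X \<in> sets borel" "Y \<in> sets borel"
    "event_cov P X Y \<le> 0" "0 \<le> event_cov Q X Y"
  shows "\<exists>R \<in> core Pl. event_cov R X Y = 0"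
proof -
  define mix where "mix = (\<lambda>t Z. t * measure P Z + (1 - t) * measure Q Z)"
  define g where "g = (\<lambda>t. mix t (X \<inter> Y) - mix t X * mix t Y)"
  have "g 1 \<le> 0" "0 \<le> g 0"
    using assms(5,6) unfolding g_def mix_def event_cov_def by simp_all
  moreover have "continuous_on {0..1} g"
    unfolding g_def mix_def by (intro continuous_intros)
  ultimately obtain t where t: "0 \<le> t" "t \<le> 1" "g t = 0"
    using IVT2'[of g 1 0 0] by auto
  have "event_cov (mix_measure t P Q) X Y = g t"
    using assms t unfolding event_cov_def g_def mix_def
    by (simp add: measure_mix_measure core_memD sets.Int)
  then show ?thesis
    using mix_measure_in_core[OF assms(1,2) t(1,2)] t(3) by metis
qed

lemma core_event_cov_zero_if_same_sign_Compl:
  assumes "P \<in> core Pl" "Q \<in> core Pl" "X \<in> sets borel" "Y \<in> sets borel"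
    "0 < event_cov P X Y * event_cov Q X (- Y)"
  shows "\<exists>R \<in> core Pl. event_cov R X Y = 0"
proof -
  have "event_cov P X Y * event_cov Q X Y < 0"
    using assms(5) event_cov_Compl_right[OF assms(2-4)] by simp
  then have "event_cov P X Y \<le> 0 \<and> 0 \<le> event_cov Q X Y \<or> event_cov Q X Y \<le> 0 \<and> 0 \<le> event_cov P X Y"
    by (auto simp: mult_less_0_iff)
  then show ?thesis
    using core_event_cov_zero_between assms(1-4) by blast
qed

lemma choquet_capacity_2_lower_envelope:
  assumes "choquet_capacity_2 Pl" "X \<in> sets borel"
  shows "Pl X = (INF P \<in> core Pl. measure P X)" "core Pl \<noteq> {}"
  using assms unfolding choquet_capacity_2_def by auto

lemma lower_prob_nonneg:
  assumes "choquet_capacity_2 Pl" "X \<in> sets borel"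
  shows "0 \<le> Pl X"
  using choquet_capacity_2_lower_envelope[OF assms] by (auto intro: cINF_greatest)

lemma lower_prob_le_upper_prob:
  assumes "choquet_capacity_2 Pl" "X \<in> sets borel"
  shows "Pl X \<le> upper_prob Pl X"
proof -
  obtain P where "P \<in> core Pl"
    using choquet_capacity_2_lower_envelope[OF assms] by blast
  then show ?thesis
    using core_memD(4) measure_core_le_upper_prob assms(2) by (blast intro: order_trans)
qed

lemma exists_core_measure_less:
  assumes "choquet_capacity_2 Pl" "X \<in> sets borel" "Pl X < c"
  shows "\<exists>P \<in> core Pl. measure P X < c"
proof -
  have "bdd_below ((\<lambda>P. measure P X) ` core Pl)"
    by (rule bdd_belowI[where m = 0]) auto
  then show ?thesis
    using assms(3) choquet_capacity_2_lower_envelope[OF assms(1,2)] by (simp add: cINF_less_iff)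
qed

lemma exists_core_event_cov_neg:
  assumes "choquet_capacity_2 Pl" "X \<in> sets borel" "Y \<in> sets borel"
    "Pl (X \<inter> Y) < Pl X * Pl Y"
  shows "\<exists>P \<in> core Pl. event_cov P X Y < 0"
proof -
  obtain P where P: "P \<in> core Pl" "measure P (X \<inter> Y) < Pl X * Pl Y"
    using exists_core_measure_less[OF assms(1) _ assms(4)] assms(2,3) by blast
  have "Pl X * Pl Y \<le> measure P X * measure P Y"
    using core_memD(4)[OF P(1)] assms(2,3) lower_prob_nonneg[OF assms(1)] by (intro mult_mono) auto
  with P show ?thesis
    unfolding event_cov_def by force
qed

lemma exists_core_event_cov_pos:
  assumes "choquet_capacity_2 Pl" "X \<in> sets borel" "Y \<in> sets borel"
    "upper_prob Pl X * upper_prob Pl Y < upper_prob Pl (X \<inter> Y)"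
  shows "\<exists>P \<in> core Pl. 0 < event_cov P X Y"
proof -
  have "- (X \<inter> Y) \<in> sets borel" "Pl (- (X \<inter> Y)) < 1 - upper_prob Pl X * upper_prob Pl Y"
    using assms(2-4) unfolding upper_prob_def[of Pl "X \<inter> Y"] by auto
  then obtain P where P: "P \<in> core Pl" "measure P (- (X \<inter> Y)) < 1 - upper_prob Pl X * upper_prob Pl Y"
    using exists_core_measure_less[OF assms(1)] by blast
  then have "upper_prob Pl X * upper_prob Pl Y < measure P (X \<inter> Y)"
    using measure_core_Compl[OF P(1), of "X \<inter> Y"] assms(2,3) by simp
  moreover have "measure P X * measure P Y \<le> upper_prob Pl X * upper_prob Pl Y"
    using measure_core_le_upper_prob[OF P(1)] assms(2,3)
    by (intro mult_mono) (auto intro: order_trans[OF measure_nonneg])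
  ultimately show ?thesis
    using P(1) unfolding event_cov_def by force
qed

lemma dilates_Compl_pair_cases:
  assumes "dilates Pl condL condU {B, - B} A"
  shows "(condL A B < Pl A \<and> condL A (- B) < Pl A) \<or>
    (upper_prob Pl A < condU A B \<and> upper_prob Pl A < condU A (- B))"
  using assms unfolding dilates_def by (simp add: cSup_insert cInf_insert sup_max inf_min)

lemma upper_prob_Compl: "upper_prob Pl (- A) = 1 - Pl A"
  unfolding upper_prob_def by simp

lemma dempster_dilation_upper_prob_Int_greater:
  assumes "dilates Pl (dempster_lower Pl) (dempster_upper Pl) {B, - B} A"
    "0 < upper_prob Pl B" "0 < upper_prob Pl (- B)"
  shows "\<exists>X \<in> {A, - A}. \<forall>Y \<in> {B, - B}. upper_prob Pl X * upper_prob Pl Y < upper_prob Pl (X \<inter> Y)"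
proof -
  have upper_less_iff: "upper_prob Pl X < dempster_upper Pl X Y
      \<longleftrightarrow> upper_prob Pl X * upper_prob Pl Y < upper_prob Pl (X \<inter> Y)"
    if "Y \<in> {B, - B}" for X Y
    using that assms(2,3) unfolding dempster_upper_def by (auto simp: pos_less_divide_eq)
  have "dempster_lower Pl A Y < Pl A \<longleftrightarrow> upper_prob Pl (- A) < dempster_upper Pl (- A) Y" for Y
    unfolding dempster_lower_def upper_prob_Compl by auto
  then show ?thesis
    using dilates_Compl_pair_cases[OF assms(1)] upper_less_iff by auto
qed

lemma geometric_dilation_lower_prob_Int_less:
  assumes "dilates Pl (geometric_lower Pl) (geometric_upper Pl) {B, - B} A"
    "0 < Pl B" "0 < Pl (- B)"
  shows "\<exists>X \<in> {A, - A}. \<forall>Y \<in> {B, - B}. Pl (X \<inter> Y) < Pl X * Pl Y"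
proof -
  have lower_less_iff: "geometric_lower Pl X Y < Pl X \<longleftrightarrow> Pl (X \<inter> Y) < Pl X * Pl Y"
    if "Y \<in> {B, - B}" for X Y
    using that assms(2,3) unfolding geometric_lower_def by (auto simp: pos_divide_less_eq)
  have "upper_prob Pl A < geometric_upper Pl A Y \<longleftrightarrow> geometric_lower Pl (- A) Y < Pl (- A)" for Y
    unfolding geometric_upper_def upper_prob_def by auto
  then show ?thesis
    using dilates_Compl_pair_cases[OF assms(1)] lower_less_iff by auto
qed

lemma dempster_dilation_event_cov_same_sign:
  assumes "choquet_capacity_2 Pl" "A \<in> sets borel" "B \<in> sets borel"
    "0 < upper_prob Pl B" "0 < upper_prob Pl (- B)"
    "dilates Pl (dempster_lower Pl) (dempster_upper Pl) {B, - B} A"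
  shows "\<exists>X \<in> {A, - A}. \<exists>P \<in> core Pl. \<exists>Q \<in> core Pl.
    0 < event_cov P X B * event_cov Q X (- B)"
proof -
  obtain X where X: "X \<in> {A, - A}"
    and greater: "\<forall>Y \<in> {B, - B}. upper_prob Pl X * upper_prob Pl Y < upper_prob Pl (X \<inter> Y)"
    using dempster_dilation_upper_prob_Int_greater[OF assms(6,4,5)] by blast
  have "X \<in> sets borel"
    using X assms(2) by auto
  then obtain P Q where "P \<in> core Pl" "0 < event_cov P X B" "Q \<in> core Pl" "0 < event_cov Q X (- B)"
    using exists_core_event_cov_pos[OF assms(1)] greater assms(3) by (meson borel_comp insertCI)
  then show ?thesis
    using X mult_pos_pos by blast
qed

lemma geometric_dilation_event_cov_same_sign:
  assumes "choquet_capacity_2 Pl" "A \<in> sets borel" "B \<in> sets borel"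
    "0 < Pl B" "0 < Pl (- B)"
    "dilates Pl (geometric_lower Pl) (geometric_upper Pl) {B, - B} A"
  shows "\<exists>X \<in> {A, - A}. \<exists>P \<in> core Pl. \<exists>Q \<in> core Pl.
    0 < event_cov P X B * event_cov Q X (- B)"
proof -
  obtain X where X: "X \<in> {A, - A}" and less: "\<forall>Y \<in> {B, - B}. Pl (X \<inter> Y) < Pl X * Pl Y"
    using geometric_dilation_lower_prob_Int_less[OF assms(6,4,5)] by blast
  have "X \<in> sets borel"
    using X assms(2) by auto
  then obtain P Q where "P \<in> core Pl" "event_cov P X B < 0" "Q \<in> core Pl" "event_cov Q X (- B) < 0"
    using exists_core_event_cov_neg[OF assms(1)] less assms(3) by (meson borel_comp insertCI)
  then show ?thesis
    using X mult_neg_neg by blast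
qed

theorem corollary5p7:
  fixes Pl :: "'a::polish_space set \<Rightarrow> real" and A B :: "'a set"
  assumes "choquet_capacity_2 Pl"
    and "A \<in> sets borel" and "B \<in> sets borel"
    and "Pl B > 0" and "Pl (- B) > 0"
    and "dilates Pl (dempster_lower Pl) (dempster_upper Pl) {B, - B} A \<or>
         dilates Pl (geometric_lower Pl) (geometric_upper Pl) {B, - B} A"
  shows "\<exists>P \<in> core Pl. measure P (A \<inter> B) = measure P A * measure P B"
proof -
  note cap = assms(1) and borel = assms(2,3) borel_comp[OF assms(2)] borel_comp[OF assms(3)]
  have upper_pos: "0 < upper_prob Pl B" "0 < upper_prob Pl (- B)"
    using assms(4,5) lower_prob_le_upper_prob[OF cap] borel by (auto intro: less_le_trans)
  obtain X P Q where X: "X \<in> {A, - A}" and PQ: "P \<in> core Pl" "Q \<in> core Pl"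
    "0 < event_cov P X B * event_cov Q X (- B)"
    using assms(6) dempster_dilation_event_cov_same_sign[OF cap assms(2,3) upper_pos]
      geometric_dilation_event_cov_same_sign[OF cap assms(2,3,4,5)] by blast
  obtain R where R: "R \<in> core Pl" "event_cov R X B = 0"
    using core_event_cov_zero_if_same_sign_Compl[OF PQ(1,2) _ _ PQ(3)] X borel by blast
  then have "event_cov R A B = 0"
    using X event_cov_Compl_left[OF R(1) borel(1,2)] by auto
  with R(1) show ?thesis
    unfolding event_cov_def by auto
qed

end
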